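(* Let $D\in(0,1]$ and define $\mathcal F_{\bm B}:=\{r_2\in[\underline x,\bar x]:(\bm R\bm c^m)^\top G_{\bm B}(r_2)\le D\}$, $\mathcal F_{\bm A}:=\{(r_1,r_3,p)\in F:(\bm R\bm c^m)^\top G_{\bm A}(r_1,r_3,p)\le D\}$, $\mathcal F_{\bm B}^{=}:=\{r_2\in[\underline x,\bar x]:(\bm R\bm c^m)^\top G_{\bm B}(r_2)=D\}$ and $\mathcal F_{\bm A}^{=}:=\{(r_1,r_3,p)\in F:(\bm R\bm c^m)^\top G_{\bm A}(r_1,r_3,p)=D\}$. Then $$\max_{r_2\in\mathcal F_{\bm B}}(\bm R\bm v_1^m)^\top G_{\bm B}(r_2)=\max_{r_2\in\mathcal F_{\bm B}^{=}}(\bm R\bm v_1^m)^\top G_{\bm B}(r_2),\qquad \max_{(r_1,r_3,p)\in\mathcal F_{\bm A}}(\bm R\bm v_2^m)^\top G_{\bm A}(r_1,r_3,p)=\max_{(r_1,r_3,p)\in\mathcal F_{\bm A}^{=}}(\bm R\bm v_2^m)^\top G_{\bm A}(r_1,r_3,p).$$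
   Context: Let $N\ge3$ be an integer and $\underline x=x_1<x_2<\cdots<x_N=\bar x$ real numbers; $\bm e$ denotes the all-ones vector of the appropriate dimension. Define $\bm g:[\underline x,\bar x]\to\mathbb R^{N-1}$ by $\bm g(x_1)=\bm 0$ and, for $x\in(x_i,x_{i+1}]$ ($i\in\{1,\dots,N-1\}$), $\bm g(x)=(1,\dots,1,\frac{x-x_i}{x_{i+1}-x_i},0,\dots,0)$ with the first $i-1$ entries equal to $1$, the $i$-th entry $\frac{x-x_i}{x_{i+1}-x_i}$ and the last $N-1-i$ entries $0$. For $\bm v\in\mathbb R^{N-2}$ let $\bm R\bm v:=(v_1,\dots,v_{N-2},1-\bm e^\top\bm v)\in\mathbb R^{N-1}$. Define $G_{\bm A}(r_1,r_3,p):=(1-p)\bm g(r_1)+p\,\bm g(r_3)$, $G_{\bm B}(r_2):=\bm g(r_2)$, and $F:=\{(r_1,r_3,p)\in[\underline x,\bar x]\times[\underline x,\bar x]\times[0,1]: r_1\le r_3\}$. Fix $m\ge1$ and data $(r_1^k,r_3^k,p^k)\in F$, $r_2^k\in[\underline x,\bar x]$, $l_k\in\{-1,1\}$ for $k=1,\dots,m-1$. Let $\mathcal V^{m-1}:=\{\bm v\in\mathbb R^{N-2}: v_i\ge0\ (i=1,\dots,N-2),\ \bm e^\top\bm v\le1,\ l_k(\bm R\bm v)^\top(G_{\bm A}(r_1^k,r_3^k,p^k)-G_{\bm B}(r_2^k))\le0\ (k=1,\dots,m-1)\}$, assumed to have nonempty interior; write its defining inequalities as $\tilde{\bm a}_i^\top\bm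 v\le\tilde b_i$. Let $\bm c^m$ be its analytic center, i.e. the maximizer over the interior of $\mathcal V^{m-1}$ of $\sum_i\log(\tilde b_i-\tilde{\bm a}_i^\top\bm v)$; in particular $c^m_i>0$ for all $i$ and $1-\bm e^\top\bm c^m>0$. Let $\bm H:=\sum_i\tilde{\bm a}_i\tilde{\bm a}_i^\top/(\tilde b_i-\tilde{\bm a}_i^\top\bm c^m)^2$ (Sonnevend's inner ellipsoid is $\{\bm v:(\bm v-\bm c^m)^\top\bm H(\bm v-\bm c^m)\le1\}$), and let $\bm v_1^m,\bm v_2^m\in\mathcal V^{m-1}$ be the two points (in some fixed order) where the line through $\bm c^m$ in the direction of the longest axis of this ellipsoid meets the boundary of $\mathcal V^{m-1}$. *)

theory Defs
  imports Complex_Main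
begin

text \<open>Conventions. Vectors in R^n are functions nat => real, coordinates 1..n,
  all other coordinates 0 (predicate supp). Breakpoints x 1 < ... < x N.\<close>

definition supp :: "nat \<Rightarrow> (nat \<Rightarrow> real) \<Rightarrow> bool" where
  "supp n v \<longleftrightarrow> (\<forall>i. i \<notin> {1..n} \<longrightarrow> v i = 0)"

definition dotp :: "nat \<Rightarrow> (nat \<Rightarrow> real) \<Rightarrow> (nat \<Rightarrow> real) \<Rightarrow> real" where
  "dotp n a b = (\<Sum>j=1..n. a j * b j)"

text \<open>Interior of a set of vectors in R^n (sup-norm balls, same topology as Euclidean).\<close>
definition interior_n :: "nat \<Rightarrow> (nat \<Rightarrow> real) set \<Rightarrow> (nat \<Rightarrow> real) set" where
  "interior_n n S = {v \<in> S. supp n v \<and> (\<exists>\<epsilon>>0. \<forall>w. supp n w \<and> (\<forall>i\<in>{1..n}. \<bar>w i - v i\<bar> < \<epsilon>) \<longrightarrow> w \<in> S)}"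

definition gmap :: "(nat \<Rightarrow> real) \<Rightarrow> nat \<Rightarrow> real \<Rightarrow> (nat \<Rightarrow> real)" where
  "gmap x N t = (if t = x 1 then (\<lambda>j. 0) else
     (let i = (THE i. i \<in> {1..N-1} \<and> x i < t \<and> t \<le> x (Suc i)) in
       (\<lambda>j. if j \<in> {1..N-1} then
               (if j < i then 1 else if j = i then (t - x i) / (x (Suc i) - x i) else 0)
             else 0)))"

definition GA :: "(nat \<Rightarrow> real) \<Rightarrow> nat \<Rightarrow> real \<Rightarrow> real \<Rightarrow> real \<Rightarrow> (nat \<Rightarrow> real)" where
  "GA x N r1 r3 p = (\<lambda>j. (1 - p) * gmap x N r1 j + p * gmap x N r3 j)"

definition GB :: "(nat \<Rightarrow> real) \<Rightarrow> nat \<Rightarrow> real \<Rightarrow> (nat \<Rightarrow> real)" where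
  "GB x N r2 = gmap x N r2"

definition Rvec :: "nat \<Rightarrow> (nat \<Rightarrow> real) \<Rightarrow> (nat \<Rightarrow> real)" where
  "Rvec N v = (\<lambda>j. if j \<in> {1..N-2} then v j
                   else if j = N - 1 then 1 - (\<Sum>i=1..N-2. v i) else 0)"

definition Fset :: "(nat \<Rightarrow> real) \<Rightarrow> nat \<Rightarrow> (real \<times> real \<times> real) set" where
  "Fset x N = {(r1, r3, p). r1 \<in> {x 1..x N} \<and> r3 \<in> {x 1..x N} \<and> p \<in> {0..1} \<and> r1 \<le> r3}"

definition dvec :: "(nat \<Rightarrow> real) \<Rightarrow> nat \<Rightarrow> (nat \<Rightarrow> real) \<Rightarrow> (nat \<Rightarrow> real) \<Rightarrow> (nat \<Rightarrow> real)
    \<Rightarrow> (nat \<Rightarrow> real) \<Rightarrow> nat \<Rightarrow> (nat \<Rightarrow> real)" where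
  "dvec x N r1s r3s ps r2s k = (\<lambda>j. GA x N (r1s k) (r3s k) (ps k) j - GB x N (r2s k) j)"

definition Vset :: "(nat \<Rightarrow> real) \<Rightarrow> nat \<Rightarrow> nat \<Rightarrow> (nat \<Rightarrow> real) \<Rightarrow> (nat \<Rightarrow> real) \<Rightarrow> (nat \<Rightarrow> real)
    \<Rightarrow> (nat \<Rightarrow> real) \<Rightarrow> (nat \<Rightarrow> real) \<Rightarrow> (nat \<Rightarrow> real) set" where
  "Vset x N m r1s r3s ps r2s l = {v. supp (N-2) v \<and> (\<forall>i\<in>{1..N-2}. v i \<ge> 0) \<and>
      (\<Sum>i=1..N-2. v i) \<le> 1 \<and>
      (\<forall>k\<in>{1..m-1}. l k * dotp (N-1) (Rvec N v) (dvec x N r1s r3s ps r2s k) \<le> 0)}"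

text \<open>The defining inequalities of V written as a_i^T v <= b_i, i = 1..N+m-2:
  i <= N-2: -v_i <= 0; i = N-1: e^T v <= 1;
  i = N-1+k: l_k (R v)^T d_k <= 0, i.e. sum_j l_k (d_k j - d_k (N-1)) v_j <= - l_k d_k (N-1).\<close>
definition ncons :: "nat \<Rightarrow> nat \<Rightarrow> nat" where
  "ncons N m = N - 1 + (m - 1)"

definition acons :: "nat \<Rightarrow> (nat \<Rightarrow> nat \<Rightarrow> real) \<Rightarrow> (nat \<Rightarrow> real) \<Rightarrow> nat \<Rightarrow> (nat \<Rightarrow> real)" where
  "acons N d l i = (if i \<le> N - 2 then (\<lambda>j. if j = i then -1 else 0)
     else if i = N - 1 then (\<lambda>j. if j \<in> {1..N-2} then 1 else 0)
     else (\<lambda>j. if j \<in> {1..N-2} then l (i - (N-1)) * (d (i - (N-1)) j - d (i - (N-1)) (N-1)) else 0))"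

definition bcons :: "nat \<Rightarrow> (nat \<Rightarrow> nat \<Rightarrow> real) \<Rightarrow> (nat \<Rightarrow> real) \<Rightarrow> nat \<Rightarrow> real" where
  "bcons N d l i = (if i \<le> N - 2 then 0 else if i = N - 1 then 1
     else - l (i - (N-1)) * d (i - (N-1)) (N-1))"

definition slack :: "nat \<Rightarrow> (nat \<Rightarrow> nat \<Rightarrow> real) \<Rightarrow> (nat \<Rightarrow> real) \<Rightarrow> nat \<Rightarrow> (nat \<Rightarrow> real) \<Rightarrow> real" where
  "slack N d l i v = bcons N d l i - dotp (N-2) (acons N d l i) v"

definition barrier :: "nat \<Rightarrow> nat \<Rightarrow> (nat \<Rightarrow> nat \<Rightarrow> real) \<Rightarrow> (nat \<Rightarrow> real) \<Rightarrow> (nat \<Rightarrow> real) \<Rightarrow> real" where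
  "barrier N m d l v = (\<Sum>i=1..ncons N m. ln (slack N d l i v))"

definition analytic_center :: "nat \<Rightarrow> nat \<Rightarrow> (nat \<Rightarrow> nat \<Rightarrow> real) \<Rightarrow> (nat \<Rightarrow> real)
    \<Rightarrow> (nat \<Rightarrow> real) set \<Rightarrow> (nat \<Rightarrow> real) \<Rightarrow> bool" where
  "analytic_center N m d l V c \<longleftrightarrow> c \<in> interior_n (N-2) V \<and>
     (\<forall>i\<in>{1..ncons N m}. slack N d l i c > 0) \<and>
     (\<forall>v\<in>interior_n (N-2) V. barrier N m d l v \<le> barrier N m d l c)"

definition Hmat :: "nat \<Rightarrow> nat \<Rightarrow> (nat \<Rightarrow> nat \<Rightarrow> real) \<Rightarrow> (nat \<Rightarrow> real) \<Rightarrow> (nat \<Rightarrow> real)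
    \<Rightarrow> nat \<Rightarrow> nat \<Rightarrow> real" where
  "Hmat N m d l c j j' = (\<Sum>i=1..ncons N m. acons N d l i j * acons N d l i j' / (slack N d l i c)^2)"

definition quadH :: "nat \<Rightarrow> (nat \<Rightarrow> nat \<Rightarrow> real) \<Rightarrow> (nat \<Rightarrow> real) \<Rightarrow> real" where
  "quadH n H u = (\<Sum>j=1..n. \<Sum>j'=1..n. u j * H j j' * u j')"

text \<open>u spans the longest axis of the ellipsoid {v. (v-c)^T H (v-c) <= 1}:
  c + u is a point of the ellipsoid farthest from the center c.\<close>
definition longest_axis :: "nat \<Rightarrow> (nat \<Rightarrow> nat \<Rightarrow> real) \<Rightarrow> (nat \<Rightarrow> real) \<Rightarrow> bool" where
  "longest_axis n H u \<longleftrightarrow> supp n u \<and> u \<noteq> (\<lambda>j. 0) \<and> quadH n H u \<le> 1 \<and>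
     (\<forall>w. supp n w \<and> quadH n H w \<le> 1 \<longrightarrow> dotp n w w \<le> dotp n u u)"

definition is_max_val :: "'a set \<Rightarrow> ('a \<Rightarrow> real) \<Rightarrow> real \<Rightarrow> bool" where
  "is_max_val S f M \<longleftrightarrow> (\<exists>s\<in>S. f s = M) \<and> (\<forall>s\<in>S. f s \<le> M)"

end

theory Submission imports Defs "HOL-Analysis.Analysis" begin

text \<open>On \<open>[x\<^sub>1, x\<^sub>N]\<close> the coordinates of \<open>g\<close> are the clamped ramps
  \<open>g\<^sub>j(t) = max 0 (min 1 ((t - x\<^sub>j) / (x\<^sub>j\<^sub>+\<^sub>1 - x\<^sub>j)))\<close>, so for a weight vector \<open>w\<close> the map
  \<open>t \<mapsto> w\<^sup>T g(t)\<close> is continuous, vanishes at \<open>x\<^sub>1\<close>, equals \<open>e\<^sup>T w\<close> at \<open>x\<^sub>N\<close>, and is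
  nondecreasing when \<open>w \<ge> 0\<close>. For \<open>v \<in> V\<close> the vector \<open>R v\<close> is nonnegative, and
  \<open>e\<^sup>T R v = 1 \<ge> D\<close> for every \<open>v\<close>. The feasible sets are compact, so both maxima over
  the sublevel sets are attained. A maximiser can then be raised (\<open>r\<^sub>2\<close> to \<open>s\<close>, resp.
  \<open>r\<^sub>1, r\<^sub>3\<close> to \<open>max r\<^sub>1 s, max r\<^sub>3 s\<close> with \<open>p\<close> fixed) until the constraint becomes active,
  by the intermediate value theorem in \<open>s\<close>, without decreasing the objective.\<close>

lemma max_on_sublevel_eq_max_on_level:
  fixes f h :: "'a::t2_space \<Rightarrow> real"
  assumes K: "compact K" and f: "continuous_on K f" and h: "continuous_on K h"
    and z\<^sub>0: "z\<^sub>0 \<in> K" "h z\<^sub>0 \<le> D"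
    and raise: "\<And>z. z \<in> K \<Longrightarrow> h z \<le> D \<Longrightarrow> \<exists>z'\<in>K. h z' = D \<and> f z \<le> f z'"
  shows "\<exists>M. is_max_val {z \<in> K. h z \<le> D} f M \<and> is_max_val {z \<in> K. h z = D} f M"
proof -
  define S where "S = {z \<in> K. h z \<le> D}"
  have "compact (K \<inter> (K \<inter> h -` {..D}))"
    using compact_Int_closed[OF K continuous_closed_preimage[OF h compact_imp_closed[OF K] closed_atMost]] .
  moreover have "S = K \<inter> (K \<inter> h -` {..D})" unfolding S_def by auto
  ultimately have "compact S" by simp
  moreover have "S \<noteq> {}" using z\<^sub>0 unfolding S_def by auto
  moreover have "continuous_on S f" using f unfolding S_def by (rule continuous_on_subset) auto
  ultimately obtain z where z: "z \<in> S" and z_max: "\<forall>y\<in>S. f y \<le> f z"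
    using continuous_attains_sup by blast
  then obtain z' where z': "z' \<in> K" "h z' = D" "f z \<le> f z'"
    using raise unfolding S_def by blast
  then have "f z' = f z" using z_max unfolding S_def by (simp add: order_antisym)
  then have "is_max_val {z \<in> K. h z = D} f (f z)"
    using z' z_max unfolding is_max_val_def S_def by auto
  moreover have "is_max_val S f (f z)" using z z_max unfolding is_max_val_def by auto
  ultimately show ?thesis unfolding S_def by blast
qed

definition ramp :: "(nat \<Rightarrow> real) \<Rightarrow> nat \<Rightarrow> real \<Rightarrow> real" where
  "ramp x j t = max 0 (min 1 ((t - x j) / (x (Suc j) - x j)))"

definition ramp_comb :: "(nat \<Rightarrow> real) \<Rightarrow> nat \<Rightarrow> (nat \<Rightarrow> real) \<Rightarrow> real \<Rightarrow> real" where
  "ramp_comb x N w t = (\<Sum>j=1..N-1. w j * ramp x j t)"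

lemma continuous_on_ramp [continuous_intros]:
  "continuous_on S f \<Longrightarrow> continuous_on S (\<lambda>z. ramp x j (f z))"
  unfolding ramp_def divide_inverse by (intro continuous_intros)

lemma continuous_on_ramp_comb [continuous_intros]:
  "continuous_on S f \<Longrightarrow> continuous_on S (\<lambda>z. ramp_comb x N w (f z))"
  unfolding ramp_comb_def by (intro continuous_intros)

lemma ramp_mono:
  assumes "x j < x (Suc j)" "s \<le> t"
  shows "ramp x j s \<le> ramp x j t"
proof -
  have "(s - x j) / (x (Suc j) - x j) \<le> (t - x j) / (x (Suc j) - x j)"
    using assms by (intro divide_right_mono) auto
  then show ?thesis unfolding ramp_def by linarith
qed

lemma ramp_eq_0:
  assumes "x j < x (Suc j)" "t \<le> x j"
  shows "ramp x j t = 0"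
proof -
  have "(t - x j) / (x (Suc j) - x j) \<le> 0"
    using assms by (intro divide_nonpos_pos) auto
  then show ?thesis unfolding ramp_def by simp
qed

lemma ramp_eq_1:
  assumes "x j < x (Suc j)" "x (Suc j) \<le> t"
  shows "ramp x j t = 1"
proof -
  have "1 \<le> (t - x j) / (x (Suc j) - x j)"
    using assms by (simp add: field_simps)
  then show ?thesis unfolding ramp_def by simp
qed

lemma ramp_eq_slope:
  assumes "x j \<le> t" "t \<le> x (Suc j)" "x j < x (Suc j)"
  shows "ramp x j t = (t - x j) / (x (Suc j) - x j)"
proof -
  have "(t - x j) / (x (Suc j) - x j) \<le> 1"
    using assms by (simp add: field_simps)
  then show ?thesis unfolding ramp_def using assms by simp
qed

lemma ramp_comb_mono:
  assumes "\<forall>i\<in>{1..N-1}. x i < x (Suc i)" "\<forall>j\<in>{1..N-1}. 0 \<le> w j" "s \<le> t"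
  shows "ramp_comb x N w s \<le> ramp_comb x N w t"
  unfolding ramp_comb_def
proof (rule sum_mono)
  fix j assume "j \<in> {1..N-1}"
  then show "w j * ramp x j s \<le> w j * ramp x j t"
    using assms by (intro mult_left_mono ramp_mono) auto
qed

lemma breakpoints_mono:
  fixes x :: "nat \<Rightarrow> real"
  assumes "\<forall>i\<in>{1..N-1}. x i < x (Suc i)" "1 \<le> i" "i \<le> j" "j \<le> N"
  shows "x i \<le> x j"
proof (rule lift_Suc_mono_le_ivl[where N = "{1..N-1}"])
  show "x n \<le> x (Suc n)" if "n \<in> {1..N-1}" for n using assms(1) that by (simp add: less_imp_le)
  show "i \<le> j" by fact
  show "{i..<j} \<subseteq> {1..N-1}" using assms(2,4) by auto
qed

lemma breakpoint_interval_unique: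
  fixes x :: "nat \<Rightarrow> real"
  assumes xinc: "\<forall>i\<in>{1..N-1}. x i < x (Suc i)"
    and i: "i \<in> {1..N-1}" "x i < t" "t \<le> x (Suc i)"
    and k: "k \<in> {1..N-1}" "x k < t" "t \<le> x (Suc k)"
  shows "i = k"
proof (rule ccontr)
  assume "i \<noteq> k"
  then consider "Suc i \<le> k" | "Suc k \<le> i" by linarith
  then show False
  proof cases
    case 1
    then have "x (Suc i) \<le> x k" using i k by (intro breakpoints_mono[OF xinc]) auto
    then show False using i k by simp
  next
    case 2
    then have "x (Suc k) \<le> x i" using i k by (intro breakpoints_mono[OF xinc]) auto
    then show False using i k by simp
  qed
qed

lemma breakpoint_interval_exists:
  fixes x :: "nat \<Rightarrow> real"
  assumes "N \<ge> 2" "x 1 < t" "t \<le> x N"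
  shows "\<exists>i\<in>{1..N-1}. x i < t \<and> t \<le> x (Suc i)"
proof -
  define A where "A = {i\<in>{1..N-1}. x i < t}"
  have A: "finite A" "1 \<in> A" unfolding A_def using assms by auto
  define I where "I = Max A"
  have "I \<in> A" unfolding I_def using A by (intro Max_in) auto
  then have I: "I \<in> {1..N-1}" "x I < t" unfolding A_def by auto
  have "t \<le> x (Suc I)"
  proof (cases "Suc I \<le> N - 1")
    case True
    have "Suc I \<notin> A" using Max_ge[OF A(1), of "Suc I"] unfolding I_def by auto
    then show ?thesis using True unfolding A_def by auto
  next
    case False
    then have "Suc I = N" using I assms by auto
    then show ?thesis using assms by simp
  qed
  then show ?thesis using I by blast
qed

lemma ramp_at_first_breakpoint:
  assumes xinc: "\<forall>i\<in>{1..N-1}. x i < x (Suc i)" and j: "j \<in> {1..N-1}"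
  shows "ramp x j (x 1) = 0"
  using j xinc breakpoints_mono[OF xinc, of 1 j] by (intro ramp_eq_0) auto

lemma ramp_at_last_breakpoint:
  assumes xinc: "\<forall>i\<in>{1..N-1}. x i < x (Suc i)" and j: "j \<in> {1..N-1}"
  shows "ramp x j (x N) = 1"
  using j xinc breakpoints_mono[OF xinc, of "Suc j" N] by (intro ramp_eq_1) auto

lemma gmap_eq_ramp:
  assumes xinc: "\<forall>i\<in>{1..N-1}. x i < x (Suc i)" and "N \<ge> 2" and t: "t \<in> {x 1..x N}"
  shows "gmap x N t = (\<lambda>j. if j \<in> {1..N-1} then ramp x j t else 0)"
proof (cases "t = x 1")
  case True
  then show ?thesis using ramp_at_first_breakpoint[OF xinc] unfolding gmap_def by auto
next
  case False
  then obtain i where i: "i \<in> {1..N-1}" "x i < t" "t \<le> x (Suc i)"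
    using breakpoint_interval_exists[of N x t] assms by force
  have the_i: "(THE i. i \<in> {1..N-1} \<and> x i < t \<and> t \<le> x (Suc i)) = i"
    using i breakpoint_interval_unique[OF xinc] by blast
  have "ramp x j t = (if j < i then 1 else if j = i then (t - x i) / (x (Suc i) - x i) else 0)"
    if j: "j \<in> {1..N-1}" for j
  proof -
    have xj: "x j < x (Suc j)" using xinc j by auto
    consider "j < i" | "j = i" | "i < j" by linarith
    then show ?thesis
    proof cases
      case 1
      then have "x (Suc j) \<le> x i" using i by (intro breakpoints_mono[OF xinc]) auto
      then show ?thesis using 1 xj i by (simp add: ramp_eq_1)
    next
      case 2
      then show ?thesis using xj i by (simp add: ramp_eq_slope)
    next
      case 3
      then have "x (Suc i) \<le> x j" using i j by (intro breakpoints_mono[OF xinc]) auto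
      then show ?thesis using 3 xj i by (simp add: ramp_eq_0)
    qed
  qed
  then show ?thesis unfolding gmap_def Let_def the_i using False by auto
qed

lemma dotp_GB_eq_ramp_comb:
  assumes "\<forall>i\<in>{1..N-1}. x i < x (Suc i)" "N \<ge> 2" "t \<in> {x 1..x N}"
  shows "dotp (N-1) w (GB x N t) = ramp_comb x N w t"
  unfolding dotp_def GB_def ramp_comb_def gmap_eq_ramp[OF assms] by (intro sum.cong) auto

lemma dotp_GA_eq_ramp_comb:
  assumes xinc: "\<forall>i\<in>{1..N-1}. x i < x (Suc i)" and N2: "N \<ge> 2"
    and a: "a \<in> {x 1..x N}" and b: "b \<in> {x 1..x N}"
  shows "dotp (N-1) w (GA x N a b p) = (1 - p) * ramp_comb x N w a + p * ramp_comb x N w b"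
proof -
  have "dotp (N-1) w (GA x N a b p) =
      (\<Sum>j=1..N-1. (1 - p) * (w j * gmap x N a j) + p * (w j * gmap x N b j))"
    unfolding dotp_def GA_def by (intro sum.cong) (auto simp: algebra_simps)
  also have "\<dots> = (1 - p) * dotp (N-1) w (GB x N a) + p * dotp (N-1) w (GB x N b)"
    unfolding dotp_def GB_def by (simp add: sum.distrib sum_distrib_left)
  finally show ?thesis using dotp_GB_eq_ramp_comb[OF xinc N2] a b by simp
qed

lemma ramp_comb_at_first_breakpoint:
  assumes "\<forall>i\<in>{1..N-1}. x i < x (Suc i)"
  shows "ramp_comb x N w (x 1) = 0"
  unfolding ramp_comb_def using ramp_at_first_breakpoint[OF assms] by simp

lemma ramp_comb_at_last_breakpoint:
  assumes "\<forall>i\<in>{1..N-1}. x i < x (Suc i)"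
  shows "ramp_comb x N w (x N) = (\<Sum>j=1..N-1. w j)"
  unfolding ramp_comb_def using ramp_at_last_breakpoint[OF assms] by simp

lemma ramp_comb_raise:
  assumes xinc: "\<forall>i\<in>{1..N-1}. x i < x (Suc i)"
    and wv: "\<forall>j\<in>{1..N-1}. 0 \<le> wv j" and wc: "D \<le> (\<Sum>j=1..N-1. wc j)"
    and r: "r \<in> {x 1..x N}" "ramp_comb x N wc r \<le> D"
  shows "\<exists>s\<in>{x 1..x N}. ramp_comb x N wc s = D \<and> ramp_comb x N wv r \<le> ramp_comb x N wv s"
proof -
  have "D \<le> ramp_comb x N wc (x N)" using wc ramp_comb_at_last_breakpoint[OF xinc, of wc] by simp
  then obtain s where s: "r \<le> s" "s \<le> x N" "ramp_comb x N wc s = D"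
    using IVT'[of "ramp_comb x N wc" r D "x N"] r continuous_on_ramp_comb[OF continuous_on_id] by auto
  then show ?thesis using r ramp_comb_mono[OF xinc wv s(1)] by auto
qed

lemma max_GB_on_sublevel_eq_max_on_level:
  assumes xinc: "\<forall>i\<in>{1..N-1}. x i < x (Suc i)" and N2: "N \<ge> 2"
    and wv: "\<forall>j\<in>{1..N-1}. 0 \<le> wv j" and wc: "D \<le> (\<Sum>j=1..N-1. wc j)" and "0 \<le> D"
  shows "\<exists>M. is_max_val {r \<in> {x 1..x N}. dotp (N-1) wc (GB x N r) \<le> D}
                        (\<lambda>r. dotp (N-1) wv (GB x N r)) M
           \<and> is_max_val {r \<in> {x 1..x N}. dotp (N-1) wc (GB x N r) = D}
                        (\<lambda>r. dotp (N-1) wv (GB x N r)) M"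
proof -
  have val_eq: "ramp_comb x N w r = dotp (N-1) w (GB x N r)" if "r \<in> {x 1..x N}" for w r
    using dotp_GB_eq_ramp_comb[OF xinc N2 that] by simp
  have cont: "continuous_on {x 1..x N} (\<lambda>r. dotp (N-1) w (GB x N r))" for w
    using continuous_on_ramp_comb[OF continuous_on_id] val_eq by (rule continuous_on_eq)
  show ?thesis
  proof (rule max_on_sublevel_eq_max_on_level[OF compact_Icc cont cont])
    have "x 1 \<le> x N" using breakpoints_mono[OF xinc, of 1 N] N2 by simp
    then show x1: "x 1 \<in> {x 1..x N}" by simp
    show "dotp (N-1) wc (GB x N (x 1)) \<le> D"
      using val_eq[OF x1, of wc] ramp_comb_at_first_breakpoint[OF xinc, of wc] \<open>0 \<le> D\<close> by simp
    fix r assume r: "r \<in> {x 1..x N}" "dotp (N-1) wc (GB x N r) \<le> D"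
    then have "ramp_comb x N wc r \<le> D" using val_eq[OF r(1)] by simp
    then obtain s where s: "s \<in> {x 1..x N}" "ramp_comb x N wc s = D"
        "ramp_comb x N wv r \<le> ramp_comb x N wv s"
      using ramp_comb_raise[OF xinc wv wc r(1)] by blast
    then show "\<exists>s\<in>{x 1..x N}. dotp (N-1) wc (GB x N s) = D \<and>
        dotp (N-1) wv (GB x N r) \<le> dotp (N-1) wv (GB x N s)"
      using val_eq[OF r(1)] val_eq[OF s(1)] by auto
  qed
qed

lemma compact_Fset: "compact (Fset x N)"
proof -
  have "Fset x N = ({x 1..x N} \<times> {x 1..x N} \<times> {0..1}) \<inter> {z. fst z \<le> fst (snd z)}"
    unfolding Fset_def by auto
  moreover have "closed {z :: real \<times> real \<times> real. fst z \<le> fst (snd z)}"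
    by (intro closed_Collect_le continuous_intros)
  ultimately show ?thesis by (simp add: compact_Int_closed compact_Times)
qed

definition lottery_value :: "(nat \<Rightarrow> real) \<Rightarrow> nat \<Rightarrow> (nat \<Rightarrow> real) \<Rightarrow> real \<times> real \<times> real \<Rightarrow> real" where
  "lottery_value x N w = (\<lambda>(r\<^sub>1, r\<^sub>3, p). (1 - p) * ramp_comb x N w r\<^sub>1 + p * ramp_comb x N w r\<^sub>3)"

lemma continuous_on_lottery_value: "continuous_on S (lottery_value x N w)"
  unfolding lottery_value_def case_prod_beta by (intro continuous_intros continuous_on_id)

lemma dotp_GA_eq_lottery_value:
  assumes "\<forall>i\<in>{1..N-1}. x i < x (Suc i)" "N \<ge> 2" "z \<in> Fset x N"
  shows "(\<lambda>(r\<^sub>1, r\<^sub>3, p). dotp (N-1) w (GA x N r\<^sub>1 r\<^sub>3 p)) z = lottery_value x N w z"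
  using assms dotp_GA_eq_ramp_comb[OF assms(1,2)] unfolding Fset_def lottery_value_def by auto

lemma lottery_value_raise:
  assumes xinc: "\<forall>i\<in>{1..N-1}. x i < x (Suc i)" and N2: "N \<ge> 2"
    and wv: "\<forall>j\<in>{1..N-1}. 0 \<le> wv j" and wc: "D \<le> (\<Sum>j=1..N-1. wc j)"
    and z: "z \<in> Fset x N" "lottery_value x N wc z \<le> D"
  shows "\<exists>z'\<in>Fset x N. lottery_value x N wc z' = D \<and> lottery_value x N wv z \<le> lottery_value x N wv z'"
proof -
  obtain a b p where abp: "z = (a, b, p)" "a \<in> {x 1..x N}" "b \<in> {x 1..x N}" "p \<in> {0..1}" "a \<le> b"
    using z(1) unfolding Fset_def by auto
  define lift where "lift s = (max a s, max b s, p)" for s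
  have "x 1 \<le> x N" using breakpoints_mono[OF xinc, of 1 N] N2 by simp
  moreover have "lottery_value x N wc (lift (x 1)) \<le> D"
    using abp z(2) unfolding lift_def by (simp add: max_absorb1)
  moreover have "D \<le> lottery_value x N wc (lift (x N))"
    using abp wc ramp_comb_at_last_breakpoint[OF xinc, of wc] unfolding lift_def lottery_value_def
    by (simp add: max_absorb2 algebra_simps)
  moreover have "continuous_on {x 1..x N} (\<lambda>s. lottery_value x N wc (lift s))"
    unfolding lottery_value_def lift_def prod.case by (intro continuous_intros continuous_on_id)
  ultimately obtain s where s: "s \<in> {x 1..x N}" "lottery_value x N wc (lift s) = D"
    using IVT'[of "\<lambda>s. lottery_value x N wc (lift s)" "x 1" D "x N"] by auto
  have "ramp_comb x N wv a \<le> ramp_comb x N wv (max a s)" "ramp_comb x N wv b \<le> ramp_comb x N wv (max b s)"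
    by (intro ramp_comb_mono[OF xinc wv]; simp)+
  then have "lottery_value x N wv z \<le> lottery_value x N wv (lift s)"
    using abp unfolding lottery_value_def lift_def by (auto intro!: add_mono mult_left_mono)
  moreover have "lift s \<in> Fset x N" using abp s unfolding lift_def Fset_def by auto
  ultimately show ?thesis using s by blast
qed

lemma max_GA_on_sublevel_eq_max_on_level:
  assumes xinc: "\<forall>i\<in>{1..N-1}. x i < x (Suc i)" and N2: "N \<ge> 2"
    and wv: "\<forall>j\<in>{1..N-1}. 0 \<le> wv j" and wc: "D \<le> (\<Sum>j=1..N-1. wc j)" and "0 \<le> D"
  shows "\<exists>M. is_max_val {(r\<^sub>1, r\<^sub>3, p) \<in> Fset x N. dotp (N-1) wc (GA x N r\<^sub>1 r\<^sub>3 p) \<le> D}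
                        (\<lambda>(r\<^sub>1, r\<^sub>3, p). dotp (N-1) wv (GA x N r\<^sub>1 r\<^sub>3 p)) M
           \<and> is_max_val {(r\<^sub>1, r\<^sub>3, p) \<in> Fset x N. dotp (N-1) wc (GA x N r\<^sub>1 r\<^sub>3 p) = D}
                        (\<lambda>(r\<^sub>1, r\<^sub>3, p). dotp (N-1) wv (GA x N r\<^sub>1 r\<^sub>3 p)) M"
proof -
  let ?val = "\<lambda>w. \<lambda>(r\<^sub>1, r\<^sub>3, p). dotp (N-1) w (GA x N r\<^sub>1 r\<^sub>3 p)"
  have val_eq: "lottery_value x N w z = ?val w z" if "z \<in> Fset x N" for w z
    using dotp_GA_eq_lottery_value[OF xinc N2 that] by simp
  have cont: "continuous_on (Fset x N) (?val w)" for w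
    using continuous_on_lottery_value val_eq by (rule continuous_on_eq)
  have "\<exists>M. is_max_val {z \<in> Fset x N. ?val wc z \<le> D} (?val wv) M
          \<and> is_max_val {z \<in> Fset x N. ?val wc z = D} (?val wv) M"
  proof (rule max_on_sublevel_eq_max_on_level[OF compact_Fset cont cont])
    have "x 1 \<le> x N" using breakpoints_mono[OF xinc, of 1 N] N2 by simp
    then show x1: "(x 1, x 1, 0) \<in> Fset x N" unfolding Fset_def by simp
    show "?val wc (x 1, x 1, 0) \<le> D"
      using val_eq[OF x1, of wc] ramp_comb_at_first_breakpoint[OF xinc, of wc] \<open>0 \<le> D\<close>
      unfolding lottery_value_def by simp
    fix z assume z: "z \<in> Fset x N" "?val wc z \<le> D"
    then have "lottery_value x N wc z \<le> D" using val_eq by simp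
    then obtain z' where z': "z' \<in> Fset x N" "lottery_value x N wc z' = D"
        "lottery_value x N wv z \<le> lottery_value x N wv z'"
      using lottery_value_raise[OF xinc N2 wv wc z(1)] by blast
    then show "\<exists>z'\<in>Fset x N. ?val wc z' = D \<and> ?val wv z \<le> ?val wv z'"
      using val_eq[OF z(1)] val_eq[OF z'(1)] by auto
  qed
  moreover have "{(r\<^sub>1, r\<^sub>3, p) \<in> Fset x N. dotp (N-1) wc (GA x N r\<^sub>1 r\<^sub>3 p) \<le> D}
      = {z \<in> Fset x N. ?val wc z \<le> D}"
    "{(r\<^sub>1, r\<^sub>3, p) \<in> Fset x N. dotp (N-1) wc (GA x N r\<^sub>1 r\<^sub>3 p) = D}
      = {z \<in> Fset x N. ?val wc z = D}"
    by auto
  ultimately show ?thesis by (simp only:)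
qed

lemma sum_Rvec:
  assumes "N \<ge> 2"
  shows "(\<Sum>j=1..N-1. Rvec N v j) = 1"
proof -
  have "N - 1 = Suc (N - 2)" using assms by simp
  then have "(\<Sum>j=1..N-1. Rvec N v j) = (\<Sum>j=1..N-2. Rvec N v j) + Rvec N v (N-1)"
    by (simp add: sum.cl_ivl_Suc)
  also have "\<dots> = (\<Sum>j=1..N-2. v j) + (1 - (\<Sum>j=1..N-2. v j))"
    using assms unfolding Rvec_def by (intro arg_cong2[where f = "(+)"] sum.cong) auto
  finally show ?thesis by simp
qed

lemma Rvec_nonneg:
  assumes "v \<in> Vset x N m r1s r3s ps r2s l"
  shows "\<forall>j\<in>{1..N-1}. 0 \<le> Rvec N v j"
  using assms unfolding Vset_def Rvec_def by auto

theorem proposition5: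
  fixes x :: "nat \<Rightarrow> real" and N m :: nat
    and r1s r2s r3s ps l :: "nat \<Rightarrow> real"
    and c u v1 v2 :: "nat \<Rightarrow> real" and D :: real
  assumes N3: "N \<ge> 3" and m1: "m \<ge> 1"
    and xinc: "\<forall>i\<in>{1..N-1}. x i < x (Suc i)"
    and dataF: "\<forall>k\<in>{1..m-1}. (r1s k, r3s k, ps k) \<in> Fset x N"
    and dataB: "\<forall>k\<in>{1..m-1}. r2s k \<in> {x 1..x N}"
    and labels: "\<forall>k\<in>{1..m-1}. l k \<in> {-1, 1}"
    and nonempty_int: "interior_n (N-2) (Vset x N m r1s r3s ps r2s l) \<noteq> {}"
    and center: "analytic_center N m (dvec x N r1s r3s ps r2s) l
                   (Vset x N m r1s r3s ps r2s l) c"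
    and axis: "longest_axis (N-2) (Hmat N m (dvec x N r1s r3s ps r2s) l c) u"
    and v1: "v1 \<in> Vset x N m r1s r3s ps r2s l - interior_n (N-2) (Vset x N m r1s r3s ps r2s l)"
    and v1_line: "\<exists>t. v1 = (\<lambda>j. c j + t * u j)"
    and v2: "v2 \<in> Vset x N m r1s r3s ps r2s l - interior_n (N-2) (Vset x N m r1s r3s ps r2s l)"
    and v2_line: "\<exists>t. v2 = (\<lambda>j. c j + t * u j)"
    and v12: "v1 \<noteq> v2"
    and D: "0 < D" "D \<le> 1"
  shows
    "(\<exists>M. is_max_val {r2 \<in> {x 1..x N}. dotp (N-1) (Rvec N c) (GB x N r2) \<le> D}
                      (\<lambda>r2. dotp (N-1) (Rvec N v1) (GB x N r2)) M
        \<and> is_max_val {r2 \<in> {x 1..x N}. dotp (N-1) (Rvec N c) (GB x N r2) = D}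
                      (\<lambda>r2. dotp (N-1) (Rvec N v1) (GB x N r2)) M)
   \<and> (\<exists>M. is_max_val {(r1, r3, p) \<in> Fset x N. dotp (N-1) (Rvec N c) (GA x N r1 r3 p) \<le> D}
                      (\<lambda>(r1, r3, p). dotp (N-1) (Rvec N v2) (GA x N r1 r3 p)) M
        \<and> is_max_val {(r1, r3, p) \<in> Fset x N. dotp (N-1) (Rvec N c) (GA x N r1 r3 p) = D}
                      (\<lambda>(r1, r3, p). dotp (N-1) (Rvec N v2) (GA x N r1 r3 p)) M)"
proof -
  have N2: "N \<ge> 2" using N3 by simp
  have "D \<le> (\<Sum>j=1..N-1. Rvec N c j)" using sum_Rvec[OF N2] D by simp
  then show ?thesis
    using max_GB_on_sublevel_eq_max_on_level[OF xinc N2 Rvec_nonneg]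
      max_GA_on_sublevel_eq_max_on_level[OF xinc N2 Rvec_nonneg] v1 v2 D by auto
qed

end
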